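(* Let $H=(\mathcal{V},\mathcal{I})$ be an interval hypergraph and let $\mathcal{P}=\{S_1,\dots,S_k\}$ be a partition of $\mathcal{I}$ such that each $S_i$ has an exact hitting set $h_i$. Let $R=\bigcup_{i=1}^k h_i$ and define $t:\mathcal{I}\to\mathcal{V}$ by letting $t(I)$ be the unique element of $I\cap h_i$, where $S_i$ is the part containing $I$. Then the clique number of the co-occurrence graph $G_{R,t}$ is at most $k$.
   Context: An interval hypergraph has vertex set $[n]=\{1,\dots,n\}$ and hyperedges that are nonempty sets of consecutive integers. An exact hitting set of a family $S$ of hyperedges is a set $h\subseteq\mathcal{V}$ with $|h\cap I|=1$ for every $I\in S$. For a representative function $t$ (with $t(I)\in I$) and its image $R$, the co-occurrence graph $G_{R,t}$ has vertex set $R$, with distinct $u,v$ adjacent iff some $I\in\mathcal{I}$ has $u,v\in I$ and $t(I)\in\{u,v\}$. *)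

theory Defs
  imports Main "HOL-Library.Disjoint_Sets"
begin

definition interval_hypergraph :: "nat \<Rightarrow> nat set set \<Rightarrow> bool" where
  "interval_hypergraph n \<I> \<longleftrightarrow>
     (\<forall>J\<in>\<I>. J \<noteq> {} \<and> J \<subseteq> {1..n} \<and> (\<exists>a b. J = {a..b}))"

definition exact_hitting_set :: "nat set \<Rightarrow> nat set set \<Rightarrow> nat set \<Rightarrow> bool" where
  "exact_hitting_set V S h \<longleftrightarrow> h \<subseteq> V \<and> (\<forall>J\<in>S. card (h \<inter> J) = 1)"

definition cooc_adj :: "nat set set \<Rightarrow> nat set \<Rightarrow> (nat set \<Rightarrow> nat) \<Rightarrow> nat \<Rightarrow> nat \<Rightarrow> bool" where
  "cooc_adj \<I> R t u v \<longleftrightarrow> u \<in> R \<and> v \<in> R \<and> u \<noteq> v \<and>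
     (\<exists>J\<in>\<I>. u \<in> J \<and> v \<in> J \<and> t J \<in> {u, v})"

definition cooc_clique :: "nat set set \<Rightarrow> nat set \<Rightarrow> (nat set \<Rightarrow> nat) \<Rightarrow> nat set \<Rightarrow> bool" where
  "cooc_clique \<I> R t C \<longleftrightarrow> C \<subseteq> R \<and>
     (\<forall>u\<in>C. \<forall>v\<in>C. u \<noteq> v \<longrightarrow> cooc_adj \<I> R t u v)"

definition cooc_clique_number :: "nat set set \<Rightarrow> nat set \<Rightarrow> (nat set \<Rightarrow> nat) \<Rightarrow> nat" where
  "cooc_clique_number \<I> R t = Max {card C | C. cooc_clique \<I> R t C}"

end

theory Submission
  imports Defs
begin

text \<open>Take a clique C of the co-occurrence graph and two of its vertices u < v. The edge
  between them comes from a hyperedge J \<supseteq> {u..v} whose representative is u or v; since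
  the hitting set h S of the part containing J meets J only in t J, it meets {u..v}
  only in an endpoint. So for the extreme points of C some h S meets {Min C..Max C} in
  exactly one endpoint e; deleting e from C shrinks the span to avoid e, hence loses h S.
  Induction shows that at least card C hitting sets meet the span of C.\<close>

lemma span_remove_endpoint:
  fixes C :: "'a::linorder set"
  assumes "finite C" "e \<in> {Min C, Max C}" "C - {e} \<noteq> {}"
  shows "{Min (C - {e})..Max (C - {e})} \<subseteq> {Min C..Max C} - {e}"
proof -
  let ?D = "C - {e}"
  have "finite ?D" "?D \<subseteq> C" using assms(1) by auto
  then have "Min C \<le> Min ?D" "Max ?D \<le> Max C"
    using assms(3) by (auto intro: Min_antimono Max_mono)
  moreover have "e \<noteq> Min ?D" "e \<noteq> Max ?D"
    using Min_in[OF \<open>finite ?D\<close> assms(3)] Max_in[OF \<open>finite ?D\<close> assms(3)] by auto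
  moreover have "e \<le> Min ?D \<or> Max ?D \<le> e"
    using assms(1-3) by (auto intro: Min_le Max_ge)
  ultimately show ?thesis by auto
qed

lemma card_le_card_sets_meeting_span:
  fixes C :: "'a::linorder set" and h :: "'b \<Rightarrow> 'a set"
  assumes "finite P" and "finite C" and "C \<noteq> {}"
    and "\<forall>c\<in>C. \<exists>p\<in>P. c \<in> h p"
    and "\<forall>u\<in>C. \<forall>v\<in>C. u < v \<longrightarrow> (\<exists>p\<in>P. h p \<inter> {u..v} = {u} \<or> h p \<inter> {u..v} = {v})"
  shows "card C \<le> card {p\<in>P. h p \<inter> {Min C..Max C} \<noteq> {}}"
  using assms(2-5)
proof (induction C rule: finite_remove_induct)
  case empty
  then show ?case by simp
next
  case (remove C)
  let ?Q = "\<lambda>C. {p\<in>P. h p \<inter> {Min C..Max C} \<noteq> {}}"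
  have finite_Q: "finite (?Q D)" for D using \<open>finite P\<close> by simp
  have extremes: "Min C \<in> C" "Max C \<in> C" using remove.hyps(1,2) by simp_all
  show ?case
  proof (cases "Min C = Max C")
    case True
    then have "C = {Min C}"
      using remove.hyps(1) extremes by (metis Max_ge Min_le antisym singleton_iff subsetI subset_singleton_iff)
    moreover obtain p where "p \<in> P" "Min C \<in> h p"
      using remove.prems(2) extremes by blast
    ultimately have "?Q C \<noteq> {}" using True by auto
    then have "0 < card (?Q C)" using finite_Q[of C] card_gt_0_iff by blast
    moreover have "card C = 1" using \<open>C = {Min C}\<close> by (metis is_singletonI is_singleton_altdef)
    ultimately show ?thesis by simp
  next
    case False
    then have "Min C < Max C" using remove.hyps(1) extremes by (simp add: order_less_le)
    then obtain p e where p: "p \<in> P" "e \<in> {Min C, Max C}" "h p \<inter> {Min C..Max C} = {e}"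
      using remove.prems(3) extremes by blast
    let ?D = "C - {e}"
    have "e \<in> C" using p(2) extremes by auto
    have "?D \<noteq> {}" using p(2) False extremes by auto
    have span: "{Min ?D..Max ?D} \<subseteq> {Min C..Max C} - {e}"
      using span_remove_endpoint[OF remove.hyps(1) p(2) \<open>?D \<noteq> {}\<close>] .
    have "card ?D \<le> card (?Q ?D)"
      using remove.IH[OF \<open>e \<in> C\<close> \<open>?D \<noteq> {}\<close>] remove.prems(2,3) by auto
    also have "\<dots> < card (?Q C)"
    proof (rule psubset_card_mono[OF finite_Q])
      have "p \<in> ?Q C" "p \<notin> ?Q ?D" using span p by auto
      moreover have "?Q ?D \<subseteq> ?Q C" using span by auto
      ultimately show "?Q ?D \<subset> ?Q C" by blast
    qed
    finally have "card ?D < card (?Q C)" .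
    then show ?thesis
      using \<open>e \<in> C\<close> remove.hyps(1) by (simp add: card_Diff_singleton)
  qed
qed

corollary card_le_card_if_endpoint_hits:
  fixes C :: "'a::linorder set" and h :: "'b \<Rightarrow> 'a set"
  assumes "finite P" and "finite C"
    and "\<forall>c\<in>C. \<exists>p\<in>P. c \<in> h p"
    and "\<forall>u\<in>C. \<forall>v\<in>C. u < v \<longrightarrow> (\<exists>p\<in>P. h p \<inter> {u..v} = {u} \<or> h p \<inter> {u..v} = {v})"
  shows "card C \<le> card P"
proof (cases "C = {}")
  case False
  then have "card C \<le> card {p\<in>P. h p \<inter> {Min C..Max C} \<noteq> {}}"
    using card_le_card_sets_meeting_span assms by blast
  also have "\<dots> \<le> card P"
    using \<open>finite P\<close> by (intro card_mono) auto
  finally show ?thesis .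
qed simp

lemma cooc_adj_endpoint_hit:
  assumes H: "interval_hypergraph n \<I>"
    and part: "partition_on \<I> P"
    and hit: "\<forall>S\<in>P. exact_hitting_set {1..n} S (h S)"
    and t_def: "\<forall>S\<in>P. \<forall>J\<in>S. t J = (THE v. v \<in> J \<inter> h S)"
    and adj: "cooc_adj \<I> R t u v" and "u < v"
  shows "\<exists>S\<in>P. h S \<inter> {u..v} = {u} \<or> h S \<inter> {u..v} = {v}"
proof -
  obtain J where J: "J \<in> \<I>" "u \<in> J" "v \<in> J" "t J \<in> {u, v}"
    using adj unfolding cooc_adj_def by auto
  obtain S where S: "S \<in> P" "J \<in> S"
    using part J(1) by (auto dest: partition_onD1)
  obtain a b where "J = {a..b}"
    using H J(1) unfolding interval_hypergraph_def by auto
  then have "{u..v} \<subseteq> J" using J by auto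
  obtain w where w: "h S \<inter> J = {w}"
    using hit S unfolding exact_hitting_set_def by (metis card_1_singletonE)
  then have "t J = w" using t_def S by auto
  then have "h S \<inter> {u..v} = {t J}"
    using w \<open>{u..v} \<subseteq> J\<close> J(4) \<open>u < v\<close> by auto
  then show ?thesis using S J(4) by auto
qed

lemma cooc_clique_number_le:
  assumes "finite R" and "\<And>C. cooc_clique \<I> R t C \<Longrightarrow> card C \<le> k"
  shows "cooc_clique_number \<I> R t \<le> k"
proof -
  have "{card C | C. cooc_clique \<I> R t C} \<subseteq> card ` Pow R"
    unfolding cooc_clique_def by auto
  then have "finite {card C | C. cooc_clique \<I> R t C}"
    using \<open>finite R\<close> finite_subset by blast
  moreover have "cooc_clique \<I> R t {}"
    unfolding cooc_clique_def by simp
  ultimately show ?thesis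
    unfolding cooc_clique_number_def using assms(2) by (subst Max_le_iff) auto
qed

theorem lemma8:
  fixes n :: nat and \<I> :: "nat set set" and P :: "nat set set set"
    and h :: "nat set set \<Rightarrow> nat set" and t :: "nat set \<Rightarrow> nat"
  assumes H: "interval_hypergraph n \<I>"
    and part: "partition_on \<I> P"
    and hit: "\<forall>S\<in>P. exact_hitting_set {1..n} S (h S)"
    and t_def: "\<forall>S\<in>P. \<forall>J\<in>S. t J = (THE v. v \<in> J \<inter> h S)"
  shows "cooc_clique_number \<I> (\<Union>S\<in>P. h S) t \<le> card P"
proof (rule cooc_clique_number_le)
  let ?R = "\<Union>S\<in>P. h S"
  have "\<I> \<subseteq> Pow {1..n}"
    using H unfolding interval_hypergraph_def by auto
  then have "finite \<I>" by (rule finite_subset) simp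
  then have "finite P" using part by (rule finite_elements)
  have "?R \<subseteq> {1..n}"
    using hit unfolding exact_hitting_set_def by auto
  then show "finite ?R" by (rule finite_subset) simp
  fix C assume clique: "cooc_clique \<I> ?R t C"
  then have "C \<subseteq> ?R" unfolding cooc_clique_def by simp
  show "card C \<le> card P"
  proof (rule card_le_card_if_endpoint_hits)
    show "finite C" using \<open>C \<subseteq> ?R\<close> \<open>finite ?R\<close> finite_subset by blast
    show "\<forall>c\<in>C. \<exists>S\<in>P. c \<in> h S" using \<open>C \<subseteq> ?R\<close> by blast
    show "\<forall>u\<in>C. \<forall>v\<in>C. u < v \<longrightarrow> (\<exists>S\<in>P. h S \<inter> {u..v} = {u} \<or> h S \<inter> {u..v} = {v})"
      using clique cooc_adj_endpoint_hit[OF H part hit t_def] unfolding cooc_clique_def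
      by (metis order_less_irrefl)
  qed fact
qed

end
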